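(* For all positive integers $k$ and $n$, \[ \mathrm{LT}(k,n)\geq 3^{-4/3}k^{-2/3}n-3^{-1/3}k^{1/3}. \]
   Context: For a positive integer $k$ let $[k]=\{1,\dots,k\}$. A subsequence of a word $w\in[k]^n$ is a word formed by letters of $w$ at positions $i_1<\dots<i_m$. Two subsequences of $w$ are called twins if they are equal as words and no position of $w$ is used in both. $\mathrm{LT}(w)$ is the maximum length of twins in $w$, and $\mathrm{LT}(k,n)=\min_{w\in[k]^n}\mathrm{LT}(w)$. *)

theory Defs
  imports Complex_Main
begin

definition twins :: "nat list \<Rightarrow> nat set \<Rightarrow> nat set \<Rightarrow> bool" where
  "twins w I J \<longleftrightarrow> I \<subseteq> {..<length w} \<and> J \<subseteq> {..<length w} \<and> I \<inter> J = {}
                    \<and> nths w I = nths w J"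

definition LT_word :: "nat list \<Rightarrow> nat" where
  "LT_word w = Max {length (nths w I) | I J. twins w I J}"

definition words :: "nat \<Rightarrow> nat \<Rightarrow> nat list set" where
  "words k n = {w. length w = n \<and> set w \<subseteq> {1..k}}"

definition LT :: "nat \<Rightarrow> nat \<Rightarrow> nat" where
  "LT k n = Min (LT_word ` words k n)"

end

theory Submission
  imports Defs
begin

text \<open>Cut the word into \<open>\<lfloor>n / 3k\<rfloor>\<close> blocks of \<open>3k\<close> consecutive positions. A block
  carries at most \<open>k\<close> letters, so greedily it contains at least \<open>k/3\<close> pairwise disjoint triples
  \<open>a < b < c\<close> of positions with equal letters. Two such triples are comparable in one of the
  three product orders on the coordinate pairs \<open>(1,2)\<close>, \<open>(2,3)\<close>, \<open>(1,3)\<close>, so some chain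
  in one of these orders has length \<open>L\<close> with \<open>L\<^sup>3 \<ge> k/3\<close>. Along a chain for the pair
  \<open>(i,j)\<close>, the \<open>i\<close>-th and the \<open>j\<close>-th positions of the triples spell twins of length \<open>L\<close>.
  Twins found in different blocks concatenate.\<close>

section \<open>Twins from pairs of positions\<close>

definition coord_less :: "('a \<Rightarrow> 'b::order) \<Rightarrow> ('a \<Rightarrow> 'b) \<Rightarrow> 'a \<Rightarrow> 'a \<Rightarrow> bool" where
  "coord_less f g x y \<longleftrightarrow> f x < f y \<and> g x < g y"

lemma transp_coord_less: "transp (coord_less f g)"
  by (auto simp: transp_def coord_less_def)

lemma irreflp_coord_less: "irreflp (coord_less f g)"
  by (simp add: irreflp_def coord_less_def)

definition twin_pairs :: "nat list \<Rightarrow> (nat \<times> nat) list \<Rightarrow> bool" where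
  "twin_pairs w ps \<longleftrightarrow>
     sorted_wrt (coord_less fst snd) ps \<and>
     (\<forall>p \<in> set ps. fst p < length w \<and> snd p < length w \<and> w ! fst p = w ! snd p) \<and>
     fst ` set ps \<inter> snd ` set ps = {}"

lemma map_fst_filter_zip_self:
  "map fst (filter (\<lambda>p. snd p \<in> A) (zip xs xs)) = filter (\<lambda>i. i \<in> A) xs"
  by (induction xs) auto

lemma nths_eq_map_nth_filter:
  "nths xs A = map ((!) xs) (filter (\<lambda>i. i \<in> A) [0..<length xs])"
proof -
  have "nths xs A = nths (map ((!) xs) [0..<length xs]) A"
    by (simp add: map_nth)
  also have "\<dots> = map ((!) xs) (nths [0..<length xs] A)"
    by (simp add: nths_map)
  also have "nths [0..<length xs] A = filter (\<lambda>i. i \<in> A) [0..<length xs]"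
    unfolding nths_def by (simp add: map_fst_filter_zip_self)
  finally show ?thesis .
qed

lemma nths_set_strict_sorted:
  assumes "sorted_wrt (<) is" and "\<forall>i \<in> set is. i < length xs"
  shows "nths xs (set is) = map ((!) xs) is"
proof -
  have "filter (\<lambda>i. i \<in> set is) [0..<length xs] = is"
    by (rule sorted_distinct_set_unique)
      (use assms in \<open>auto simp: strict_sorted_iff intro: sorted_wrt_filter\<close>)
  then show ?thesis
    by (simp add: nths_eq_map_nth_filter)
qed

lemma finite_twin_lengths: "finite {length (nths w I) | I J. twins w I J}"
proof (rule finite_subset)
  show "{length (nths w I) | I J. twins w I J} \<subseteq> {..length w}"
    by (auto simp: length_nths twins_def intro: order_trans[OF card_mono[of "{..<length w}"]])
qed simp

lemma length_le_LT_word: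
  assumes "twin_pairs w ps"
  shows "length ps \<le> LT_word w"
proof -
  have sorted: "sorted_wrt (<) (map fst ps)" "sorted_wrt (<) (map snd ps)"
    using assms unfolding twin_pairs_def
    by (auto simp: sorted_wrt_map coord_less_def[abs_def] elim: sorted_wrt_mono_rel[rotated])
  have nths_fst: "nths w (fst ` set ps) = map ((!) w \<circ> fst) ps"
    using nths_set_strict_sorted[OF sorted(1), of w] assms by (auto simp: twin_pairs_def)
  have nths_snd: "nths w (snd ` set ps) = map ((!) w \<circ> snd) ps"
    using nths_set_strict_sorted[OF sorted(2), of w] assms by (auto simp: twin_pairs_def)
  have "map ((!) w \<circ> fst) ps = map ((!) w \<circ> snd) ps"
    using assms by (auto simp: twin_pairs_def)
  then have "twins w (fst ` set ps) (snd ` set ps)"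
    using assms nths_fst nths_snd by (auto simp: twins_def twin_pairs_def)
  then have "length (nths w (fst ` set ps)) \<le> LT_word w"
    unfolding LT_word_def by (blast intro: Max_ge finite_twin_lengths)
  then show ?thesis
    using nths_fst by simp
qed

lemma twin_pairs_append:
  assumes "twin_pairs w ps" "twin_pairs w qs"
    and "set ps \<subseteq> {..<B} \<times> {..<B}" "set qs \<subseteq> {B..} \<times> {B..}"
  shows "twin_pairs w (ps @ qs)"
proof -
  have "fst ` set ps \<inter> snd ` set qs = {}" "fst ` set qs \<inter> snd ` set ps = {}"
    using assms(3,4) by fastforce+
  moreover have "\<forall>p \<in> set ps. \<forall>q \<in> set qs. coord_less fst snd p q"
    using assms(3,4) by (fastforce simp: coord_less_def)
  ultimately show ?thesis
    using assms(1,2) unfolding twin_pairs_def sorted_wrt_append by auto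
qed

lemma twin_pairs_of_chain:
  assumes "sorted_wrt (coord_less f g) xs"
    and "\<forall>x \<in> set xs. f x < length w \<and> g x < length w \<and> w ! f x = w ! g x"
    and "\<forall>x \<in> set xs. \<forall>y \<in> set xs. f x \<noteq> g y"
  shows "twin_pairs w (map (\<lambda>x. (f x, g x)) xs)"
  using assms by (auto simp: twin_pairs_def coord_less_def[abs_def] sorted_wrt_map image_image)

section \<open>Long chains for several strict orders\<close>

lemma distinct_if_sorted_wrt_irreflp: "irreflp r \<Longrightarrow> sorted_wrt r xs \<Longrightarrow> distinct xs"
  by (induction xs) (auto dest: irreflpD)

lemma length_chain_le_card:
  "finite T \<Longrightarrow> irreflp r \<Longrightarrow> sorted_wrt r xs \<Longrightarrow> set xs \<subseteq> T \<Longrightarrow> length xs \<le> card T"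
  by (metis card_mono distinct_card distinct_if_sorted_wrt_irreflp)

definition chain_height :: "('a \<Rightarrow> 'a \<Rightarrow> bool) \<Rightarrow> 'a set \<Rightarrow> 'a \<Rightarrow> nat" where
  "chain_height r T x = Max {length xs | xs. sorted_wrt r (xs @ [x]) \<and> set xs \<subseteq> T}"

lemma finite_chain_heights:
  assumes "finite T" "irreflp r"
  shows "finite {length xs | xs. sorted_wrt r (xs @ [x]) \<and> set xs \<subseteq> T}"
  by (rule finite_subset[of _ "{..card T}"])
    (auto simp: sorted_wrt_append intro: length_chain_le_card[OF assms])

lemma chain_height_less_bound:
  assumes "finite T" "irreflp r" "x \<in> T"
    and "\<And>ys. sorted_wrt r ys \<Longrightarrow> set ys \<subseteq> T \<Longrightarrow> length ys \<le> M"
  shows "chain_height r T x < M"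
proof -
  let ?H = "{length xs | xs. sorted_wrt r (xs @ [x]) \<and> set xs \<subseteq> T}"
  have "length [] \<in> ?H"
    by (auto intro!: exI[of _ "[]"])
  moreover have "length xs < M" if "sorted_wrt r (xs @ [x])" "set xs \<subseteq> T" for xs
    using assms(4)[OF that(1)] assms(3) that(2) by simp
  ultimately show ?thesis
    unfolding chain_height_def using finite_chain_heights[OF assms(1,2)]
    by (subst Max_less_iff) blast+
qed

lemma chain_height_strict_mono:
  assumes "finite T" "transp r" "irreflp r" "x \<in> T" "r x y"
  shows "chain_height r T x < chain_height r T y"
proof -
  let ?H = "\<lambda>x. {length xs | xs. sorted_wrt r (xs @ [x]) \<and> set xs \<subseteq> T}"
  have "chain_height r T x \<in> ?H x"
    unfolding chain_height_def using finite_chain_heights[OF assms(1,3)]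
    by (intro Max_in) (auto intro: exI[of _ "[]"])
  then obtain xs where xs: "sorted_wrt r (xs @ [x])" "set xs \<subseteq> T" "length xs = chain_height r T x"
    by auto
  have "\<forall>z \<in> set xs. r z y"
    using xs(1) assms(2,5) by (auto simp: sorted_wrt_append dest: transpD)
  then have "sorted_wrt r ((xs @ [x]) @ [y])"
    using xs(1) assms(5) by (simp add: sorted_wrt_append)
  then have "length (xs @ [x]) \<in> ?H y"
    using xs(2) assms(4) by (auto intro!: exI[of _ "xs @ [x]"])
  then have "length (xs @ [x]) \<le> chain_height r T y"
    unfolding chain_height_def by (rule Max_ge[OF finite_chain_heights[OF assms(1,3)]])
  with xs(3) show ?thesis
    by simp
qed

text \<open>The heights of an element in the \<open>d\<close> orders determine it, which gives the bound
  (Erdos-Szekeres for \<open>d = 2\<close>).\<close>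

lemma card_le_chain_bound_power:
  assumes "finite T"
    and orders: "\<forall>r \<in> set rs. transp r \<and> irreflp r"
    and comparable: "\<forall>x \<in> T. \<forall>y \<in> T. x \<noteq> y \<longrightarrow> (\<exists>r \<in> set rs. r x y \<or> r y x)"
    and bound: "\<And>r ys. r \<in> set rs \<Longrightarrow> sorted_wrt r ys \<Longrightarrow> set ys \<subseteq> T \<Longrightarrow> length ys \<le> M"
  shows "card T \<le> M ^ length rs"
proof -
  define heights where "heights x = map (\<lambda>r. chain_height r T x) rs" for x
  have "heights ` T \<subseteq> {hs. set hs \<subseteq> {..<M} \<and> length hs = length rs}"
    using orders bound by (auto simp: heights_def intro!: chain_height_less_bound[OF assms(1)])
  moreover have "inj_on heights T"
  proof (rule inj_onI, rule ccontr)
    fix x y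
    assume "x \<in> T" "y \<in> T" "heights x = heights y" "x \<noteq> y"
    then obtain r where "r \<in> set rs" "r x y \<or> r y x"
        "chain_height r T x = chain_height r T y"
      using comparable by (fastforce simp: heights_def map_eq_conv)
    then show False
      using orders \<open>x \<in> T\<close> \<open>y \<in> T\<close> chain_height_strict_mono[OF assms(1)]
      by (metis less_irrefl)
  qed
  ultimately have "card T \<le> card {hs. set hs \<subseteq> {..<M} \<and> length hs = length rs}"
    by (metis card_image card_mono finite_lists_length_eq finite_lessThan)
  also have "\<dots> = M ^ length rs"
    by (simp add: card_lists_length_eq)
  finally show ?thesis .
qed

lemma ex_chain_card_le_length_power:
  assumes "finite T" "rs \<noteq> []"
    and orders: "\<forall>r \<in> set rs. transp r \<and> irreflp r"
    and comparable: "\<forall>x \<in> T. \<forall>y \<in> T. x \<noteq> y \<longrightarrow> (\<exists>r \<in> set rs. r x y \<or> r y x)"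
  obtains r xs where "r \<in> set rs" "sorted_wrt r xs" "set xs \<subseteq> T"
    "card T \<le> length xs ^ length rs"
proof -
  let ?L = "{length xs | r xs. r \<in> set rs \<and> sorted_wrt r xs \<and> set xs \<subseteq> T}"
  have fin: "finite ?L"
    by (rule finite_subset[of _ "{..card T}"])
      (use orders in \<open>auto intro: length_chain_le_card[OF assms(1)]\<close>)
  have "length [] \<in> ?L"
    using hd_in_set[OF \<open>rs \<noteq> []\<close>] by (auto intro!: exI[of _ "hd rs"] exI[of _ "[]"])
  then have "Max ?L \<in> ?L"
    using fin by (intro Max_in) blast+
  then obtain r xs where longest: "r \<in> set rs" "sorted_wrt r xs" "set xs \<subseteq> T"
      "length xs = Max ?L"
    by auto
  have "card T \<le> Max ?L ^ length rs"
    using fin by (intro card_le_chain_bound_power[OF assms(1) orders comparable]) (blast intro: Max_ge)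
  with that longest show thesis
    by metis
qed

section \<open>Disjoint monochromatic triples\<close>

definition triple_set :: "'a \<times> 'a \<times> 'a \<Rightarrow> 'a set" where
  "triple_set = (\<lambda>(a, b, c). {a, b, c})"

definition monochromatic_triples ::
    "('a::linorder \<Rightarrow> 'b) \<Rightarrow> 'a set \<Rightarrow> ('a \<times> 'a \<times> 'a) set \<Rightarrow> bool" where
  "monochromatic_triples col P T \<longleftrightarrow> finite T \<and>
     (\<forall>(a, b, c) \<in> T. a < b \<and> b < c \<and> {a, b, c} \<subseteq> P \<and> col a = col b \<and> col b = col c) \<and>
     (\<forall>x \<in> T. \<forall>y \<in> T. x \<noteq> y \<longrightarrow> triple_set x \<inter> triple_set y = {})"

lemma ex_three_less:
  fixes F :: "'a::linorder set"
  assumes "finite F" "2 < card F"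
  shows "\<exists>a \<in> F. \<exists>b \<in> F. \<exists>c \<in> F. a < b \<and> b < c"
proof -
  let ?l = "sorted_list_of_set F"
  have "2 < length ?l"
    using assms by simp
  then have "?l ! 0 < ?l ! 1" "?l ! 1 < ?l ! 2" "{?l ! 0, ?l ! 1, ?l ! 2} \<subseteq> F"
    using sorted_wrt_nth_less[OF strict_sorted_list_of_set[of F]] nth_mem[of _ ?l] assms(1)
    by auto
  then show ?thesis
    by blast
qed

lemma card_le_twice_card_image:
  assumes "finite P" "\<And>y. card {x \<in> P. f x = y} \<le> 2"
  shows "card P \<le> 2 * card (f ` P)"
proof -
  have "P = (\<Union>y \<in> f ` P. {x \<in> P. f x = y})"
    by blast
  then have "card P \<le> (\<Sum>y \<in> f ` P. card {x \<in> P. f x = y})"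
    by (metis assms(1) card_UN_le finite_imageI)
  also have "\<dots> \<le> (\<Sum>y \<in> f ` P. 2)"
    by (intro sum_mono assms(2))
  finally show ?thesis
    by simp
qed

lemma triple_set_subset:
  "monochromatic_triples col P T \<Longrightarrow> x \<in> T \<Longrightarrow> triple_set x \<subseteq> P"
  by (auto simp: monochromatic_triples_def triple_set_def)

lemma monochromatic_triples_insert:
  assumes T: "monochromatic_triples col P T" and new: "{a, b, c} \<inter> P = {}"
    and "a < b" "b < c" "col a = col b" "col b = col c"
  shows "monochromatic_triples col ({a, b, c} \<union> P) (insert (a, b, c) T)"
proof -
  have "triple_set (a, b, c) \<inter> triple_set y = {}" if "y \<in> T" for y
    using triple_set_subset[OF T that] new by (auto simp: triple_set_def)
  then show ?thesis
    using T assms(3-6) unfolding monochromatic_triples_def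
    by (auto simp: Int_commute)
qed

lemma ex_monochromatic_triples:
  fixes col :: "'a::linorder \<Rightarrow> 'b"
  assumes "finite P"
  shows "\<exists>T. monochromatic_triples col P T \<and> card P \<le> 3 * card T + 2 * card (col ` P)"
  using assms
proof (induction "card P" arbitrary: P rule: less_induct)
  case less
  show ?case
  proof (cases "\<exists>a \<in> P. \<exists>b \<in> P. \<exists>c \<in> P. a < b \<and> b < c \<and> col a = col b \<and> col b = col c")
    case True
    then obtain a b c where abc: "{a, b, c} \<subseteq> P" "a < b" "b < c" "col a = col b" "col b = col c"
      by blast
    define P' where "P' = P - {a, b, c}"
    have P: "P = {a, b, c} \<union> P'" and disj: "{a, b, c} \<inter> P' = {}"
      using abc(1) by (auto simp: P'_def)
    have "card {a, b, c} = 3"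
      using abc(2,3) order.strict_trans[OF abc(2,3)] by (simp add: card_insert_if less_imp_neq)
    moreover have "card ({a, b, c} \<union> P') = card {a, b, c} + card P'"
      using disj less.prems by (intro card_Un_disjoint) (auto simp: P'_def)
    ultimately have card_P: "card P = card P' + 3"
      using P by simp
    then obtain T' where T': "monochromatic_triples col P' T'"
        and card_T': "card P' \<le> 3 * card T' + 2 * card (col ` P')"
      using less.hyps[of P'] less.prems by (auto simp: P'_def)
    have "(a, b, c) \<notin> T'"
      using triple_set_subset[OF T'] disj by (force simp: triple_set_def)
    then have "card (insert (a, b, c) T') = card T' + 1"
      using T' by (simp add: monochromatic_triples_def)
    moreover have "monochromatic_triples col P (insert (a, b, c) T')"
      unfolding P by (rule monochromatic_triples_insert[OF T' disj abc(2-5)])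
    moreover have "card (col ` P') \<le> card (col ` P)"
      using less.prems by (intro card_mono) (auto simp: P'_def)
    ultimately show ?thesis
      using card_P card_T' by (intro exI[of _ "insert (a, b, c) T'"]) auto
  next
    case False
    have "card {x \<in> P. col x = y} \<le> 2" for y
    proof (rule ccontr)
      let ?F = "{x \<in> P. col x = y}"
      assume "\<not> card ?F \<le> 2"
      moreover have "finite ?F"
        using less.prems by simp
      ultimately obtain a b c where "a \<in> ?F" "b \<in> ?F" "c \<in> ?F" "a < b" "b < c"
        using ex_three_less[of ?F] by (meson not_le)
      then have "a \<in> P" "b \<in> P" "c \<in> P" "col a = col b" "col b = col c" "a < b" "b < c"
        by simp_all
      with False show False
        by blast
    qed
    then have "card P \<le> 2 * card (col ` P)"
      by (rule card_le_twice_card_image[OF less.prems])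
    moreover have "monochromatic_triples col P {}"
      by (simp add: monochromatic_triples_def)
    ultimately show ?thesis
      by auto
  qed
qed

definition triple_coords :: "(('a \<times> 'a \<times> 'a \<Rightarrow> 'a) \<times> ('a \<times> 'a \<times> 'a \<Rightarrow> 'a)) list" where
  "triple_coords = [(fst, fst \<circ> snd), (fst \<circ> snd, snd \<circ> snd), (fst, snd \<circ> snd)]"

lemma triple_coords_less:
  assumes "monochromatic_triples col P T" "(f, g) \<in> set triple_coords" "x \<in> T"
  shows "f x < g x \<and> f x \<in> triple_set x \<and> g x \<in> triple_set x \<and> col (f x) = col (g x)"
  using assms by (auto simp: triple_coords_def monochromatic_triples_def triple_set_def)

lemma ex_triple_coords_chain:
  assumes T: "monochromatic_triples col P T"
  obtains f g xs where "(f, g) \<in> set triple_coords" "sorted_wrt (coord_less f g) xs"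
    "set xs \<subseteq> T" "card T \<le> length xs ^ 3"
proof -
  define rs where "rs = map (case_prod coord_less) (triple_coords :: (('a \<times> 'a \<times> 'a \<Rightarrow> 'a) \<times> _) list)"
  text \<open>Two disjoint triples differ in all three coordinates, so two of the three
    coordinate comparisons go the same way.\<close>
  have comparable: "\<forall>x \<in> T. \<forall>y \<in> T. x \<noteq> y \<longrightarrow> (\<exists>r \<in> set rs. r x y \<or> r y x)"
  proof (intro ballI impI)
    fix x y
    assume "x \<in> T" "y \<in> T" "x \<noteq> y"
    then have disj: "triple_set x \<inter> triple_set y = {}"
      using T by (simp add: monochromatic_triples_def)
    obtain a b c a' b' c' where xy: "x = (a, b, c)" "y = (a', b', c')"
      by (cases x, cases y) blast
    have "a \<noteq> a'" "b \<noteq> b'" "c \<noteq> c'"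
      using disj by (auto simp: xy triple_set_def)
    then show "\<exists>r \<in> set rs. r x y \<or> r y x"
      unfolding xy by (simp add: rs_def triple_coords_def coord_less_def) (meson neq_iff)
  qed
  have orders: "\<forall>r \<in> set rs. transp r \<and> irreflp r"
    by (auto simp: rs_def transp_coord_less irreflp_coord_less)
  have "finite T"
    using T by (simp add: monochromatic_triples_def)
  moreover have "rs \<noteq> []" "length rs = 3"
    by (simp_all add: rs_def triple_coords_def)
  ultimately obtain r xs where "r \<in> set rs" "sorted_wrt r xs" "set xs \<subseteq> T"
      "card T \<le> length xs ^ 3"
    using ex_chain_card_le_length_power[of T rs] orders comparable by metis
  with that show thesis
    by (auto simp: rs_def)
qed

section \<open>Twins in a block of positions\<close>

lemma ex_twin_pairs_card_bound:
  assumes "finite P" "P \<subseteq> {..<length w}"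
  obtains ps where "twin_pairs w ps" "set ps \<subseteq> P \<times> P"
    "card P \<le> 3 * length ps ^ 3 + 2 * card ((!) w ` P)"
proof -
  obtain T where T: "monochromatic_triples ((!) w) P T"
      and card_P: "card P \<le> 3 * card T + 2 * card ((!) w ` P)"
    using ex_monochromatic_triples[OF assms(1)] by blast
  obtain f g xs where fg: "(f, g) \<in> set triple_coords" and chain: "sorted_wrt (coord_less f g) xs"
      "set xs \<subseteq> T" and card_T: "card T \<le> length xs ^ 3"
    using ex_triple_coords_chain[OF T] by blast
  note coords = triple_coords_less[OF T fg]
  have "twin_pairs w (map (\<lambda>x. (f x, g x)) xs)"
  proof (rule twin_pairs_of_chain[OF chain(1)])
    show "\<forall>x \<in> set xs. f x < length w \<and> g x < length w \<and> w ! f x = w ! g x"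
      using coords chain(2) triple_set_subset[OF T] assms(2) by blast
    show "\<forall>x \<in> set xs. \<forall>y \<in> set xs. f x \<noteq> g y"
      using coords chain(2) T unfolding monochromatic_triples_def
      by (metis disjoint_iff less_irrefl subsetD)
  qed
  moreover have "set (map (\<lambda>x. (f x, g x)) xs) \<subseteq> P \<times> P"
    using coords chain(2) triple_set_subset[OF T] by fastforce
  moreover have "card P \<le> 3 * length (map (\<lambda>x. (f x, g x)) xs) ^ 3 + 2 * card ((!) w ` P)"
    using card_P card_T by simp
  ultimately show thesis
    by (rule that)
qed

lemma ex_twin_pairs_in_block:
  assumes "set w \<subseteq> {1..k}" "P \<subseteq> {..<length w}" "card P = 3 * k"
  obtains ps where "twin_pairs w ps" "set ps \<subseteq> P \<times> P" "k \<le> 3 * length ps ^ 3"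
proof -
  obtain ps where ps: "twin_pairs w ps" "set ps \<subseteq> P \<times> P"
      "card P \<le> 3 * length ps ^ 3 + 2 * card ((!) w ` P)"
    using ex_twin_pairs_card_bound[OF finite_subset[OF assms(2)] assms(2)] by blast
  have "(!) w ` P \<subseteq> {1..k}"
    using assms(1,2) by (auto dest: nth_mem)
  then have "card ((!) w ` P) \<le> k"
    using card_mono[of "{1..k}"] by fastforce
  with ps(3) assms(3) have "k \<le> 3 * length ps ^ 3"
    by linarith
  with ps(1,2) show thesis
    by (rule that)
qed

lemma twin_pairs_from_blocks:
  assumes block: "\<And>j. (j + 1) * B \<le> length w \<Longrightarrow> \<exists>ps. twin_pairs w ps \<and>
      set ps \<subseteq> {j * B..<(j + 1) * B} \<times> {j * B..<(j + 1) * B} \<and> c \<le> real (length ps)"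
  shows "q * B \<le> length w \<Longrightarrow>
    \<exists>ps. twin_pairs w ps \<and> set ps \<subseteq> {..<q * B} \<times> {..<q * B} \<and> real q * c \<le> real (length ps)"
proof (induction q)
  case 0
  show ?case
    by (rule exI[of _ "[]"]) (simp add: twin_pairs_def)
next
  case (Suc q)
  then obtain ps where ps: "twin_pairs w ps" "set ps \<subseteq> {..<q * B} \<times> {..<q * B}"
      "real q * c \<le> real (length ps)"
    by auto
  obtain qs where qs: "twin_pairs w qs" "set qs \<subseteq> {q * B..<(q + 1) * B} \<times> {q * B..<(q + 1) * B}"
      "c \<le> real (length qs)"
    using block[of q] Suc.prems by auto
  have "twin_pairs w (ps @ qs)"
    by (rule twin_pairs_append[OF ps(1) qs(1) ps(2)]) (use qs(2) in auto)
  moreover have "set (ps @ qs) \<subseteq> {..<Suc q * B} \<times> {..<Suc q * B}"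
    using ps(2) qs(2) by auto
  moreover have "real (Suc q) * c \<le> real (length (ps @ qs))"
    using ps(3) qs(3) by (simp add: algebra_simps)
  ultimately show ?case
    by blast
qed

lemma cube_root_le:
  fixes k L :: nat
  assumes "k \<le> 3 * L ^ 3"
  shows "3 powr (-1/3) * real k powr (1/3) \<le> real L"
proof -
  have "(3 powr (-1/3) * real k powr (1/3)) ^ 3 = 3 powr (-1) * real k powr 1"
    by (cases "k = 0") (simp_all add: power_mult_distrib powr_power)
  also have "\<dots> = real k / 3"
    by (simp add: powr_minus_divide)
  also have "\<dots> \<le> real L ^ 3"
    using assms by (simp add: of_nat_le_iff[symmetric, where 'a = real])
  finally show ?thesis
    using power_le_imp_le_base[of _ 2 "real L"] by simp
qed

lemma LT_word_ge:
  assumes "w \<in> words k n"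
  shows "real (n div (3 * k)) * (3 powr (-1/3) * real k powr (1/3)) \<le> real (LT_word w)"
proof -
  have letters: "set w \<subseteq> {1..k}"
    using assms by (simp add: words_def)
  have "\<exists>ps. twin_pairs w ps \<and> set ps \<subseteq> {..<n div (3 * k) * (3 * k)} \<times> {..<n div (3 * k) * (3 * k)}
      \<and> real (n div (3 * k)) * (3 powr (-1/3) * real k powr (1/3)) \<le> real (length ps)"
  proof (rule twin_pairs_from_blocks)
    fix j
    assume "(j + 1) * (3 * k) \<le> length w"
    then have "{j * (3 * k)..<(j + 1) * (3 * k)} \<subseteq> {..<length w}"
      by auto
    moreover have "card {j * (3 * k)..<(j + 1) * (3 * k)} = 3 * k"
      by simp
    ultimately obtain ps where "twin_pairs w ps"
        "set ps \<subseteq> {j * (3 * k)..<(j + 1) * (3 * k)} \<times> {j * (3 * k)..<(j + 1) * (3 * k)}"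
        "k \<le> 3 * length ps ^ 3"
      using ex_twin_pairs_in_block[OF letters] by blast
    then show "\<exists>ps. twin_pairs w ps \<and>
        set ps \<subseteq> {j * (3 * k)..<(j + 1) * (3 * k)} \<times> {j * (3 * k)..<(j + 1) * (3 * k)} \<and>
        3 powr (-1/3) * real k powr (1/3) \<le> real (length ps)"
      by (blast intro: cube_root_le)
  next
    show "n div (3 * k) * (3 * k) \<le> length w"
      using assms by (simp add: words_def)
  qed
  then show ?thesis
    using length_le_LT_word by force
qed

lemma real_div_gt_diff_one: "real n / real d - 1 < real (n div d)"
  using real_of_int_floor_gt_diff_one[of "real n / real d"] by (simp add: floor_divide_of_nat_eq)

lemma ex_word_LT_eq:
  assumes "k \<ge> 1"
  obtains w where "w \<in> words k n" "LT k n = LT_word w"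
proof -
  have "finite (words k n)"
    using finite_lists_length_eq[of "{1..k}" n] by (simp add: words_def conj_commute)
  moreover have "replicate n 1 \<in> words k n"
    using assms by (auto simp: words_def)
  ultimately have "LT k n \<in> LT_word ` words k n"
    unfolding LT_def by (intro Min_in) auto
  with that show thesis
    by blast
qed

theorem theorem3:
  fixes k n :: nat
  assumes "k \<ge> 1" and "n \<ge> 1"
  shows "real (LT k n) \<ge> 3 powr (-4/3) * real k powr (-2/3) * real n - 3 powr (-1/3) * real k powr (1/3)"
proof -
  define c where "c = 3 powr (-1/3) * real k powr (1/3)"
  obtain w where w: "w \<in> words k n" "LT k n = LT_word w"
    using ex_word_LT_eq[OF assms(1)] .
  have three: "(3::real) powr (-4/3) = 3 powr (-1/3) / 3"
    using powr_diff[of "3::real" "-1/3" 1] by simp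
  have k: "real k powr (-2/3) = real k powr (1/3) / real k"
    using powr_diff[of "real k" "1/3" 1] assms(1) by simp
  have "3 powr (-4/3) * real k powr (-2/3) * real n - c = c * (real n / real (3 * k) - 1)"
    unfolding three k c_def by (simp add: field_simps)
  also have "\<dots> \<le> c * real (n div (3 * k))"
    using real_div_gt_diff_one[of n "3 * k"] by (intro mult_left_mono) (auto simp: c_def)
  also have "\<dots> \<le> real (LT k n)"
    using LT_word_ge[OF w(1)] w(2) by (simp add: c_def mult.commute)
  finally show ?thesis
    by (simp add: c_def)
qed

end
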